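(* Let $G$ be an $\alpha_i$-metric graph ($i\ge 0$ an integer) and $u$ an arbitrary vertex. Then for every $v\in F(u)$, $e(v)\ge diam(G)-3i-2$.
   Context: All graphs are finite, connected, unweighted, undirected, simple; $d(u,v)$ is the shortest-path distance. $I(u,v)=\{x: d(u,x)+d(x,v)=d(u,v)\}$. A graph is $\alpha_i$-metric if for all vertices $u,v,w,x$: whenever $v\in I(u,w)$, $w\in I(v,x)$ and $v,w$ are adjacent, then $d(u,x)\ge d(u,v)+d(v,x)-i$. $e(v)=\max_w d(w,v)$, $diam(G)=\max_v e(v)$, and $F(u)=\{w: d(u,w)=e(u)\}$ is the set of vertices most distant from $u$. *)

theory Defs
  imports Main
begin

fun walk :: "('a \<Rightarrow> 'a \<Rightarrow> bool) \<Rightarrow> 'a list \<Rightarrow> bool" where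
  "walk E [] = True"
| "walk E [x] = True"
| "walk E (x # y # xs) = (E x y \<and> walk E (y # xs))"

definition path_between :: "'a set \<Rightarrow> ('a \<Rightarrow> 'a \<Rightarrow> bool) \<Rightarrow> 'a \<Rightarrow> 'a \<Rightarrow> 'a list \<Rightarrow> bool" where
  "path_between V E u v xs \<longleftrightarrow> xs \<noteq> [] \<and> hd xs = u \<and> last xs = v \<and> set xs \<subseteq> V \<and> walk E xs"

definition graph :: "'a set \<Rightarrow> ('a \<Rightarrow> 'a \<Rightarrow> bool) \<Rightarrow> bool" where
  "graph V E \<longleftrightarrow> finite V \<and> V \<noteq> {}
     \<and> (\<forall>x y. E x y \<longrightarrow> x \<in> V \<and> y \<in> V)
     \<and> (\<forall>x y. E x y \<longrightarrow> E y x)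
     \<and> (\<forall>x. \<not> E x x)
     \<and> (\<forall>u\<in>V. \<forall>v\<in>V. \<exists>xs. path_between V E u v xs)"

definition dist :: "'a set \<Rightarrow> ('a \<Rightarrow> 'a \<Rightarrow> bool) \<Rightarrow> 'a \<Rightarrow> 'a \<Rightarrow> nat" where
  "dist V E u v = (LEAST n. \<exists>xs. path_between V E u v xs \<and> length xs = Suc n)"

definition interval :: "'a set \<Rightarrow> ('a \<Rightarrow> 'a \<Rightarrow> bool) \<Rightarrow> 'a \<Rightarrow> 'a \<Rightarrow> 'a set" where
  "interval V E u v = {x \<in> V. dist V E u x + dist V E x v = dist V E u v}"

definition alpha_metric :: "nat \<Rightarrow> 'a set \<Rightarrow> ('a \<Rightarrow> 'a \<Rightarrow> bool) \<Rightarrow> bool" where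
  "alpha_metric i V E \<longleftrightarrow>
     (\<forall>u\<in>V. \<forall>v\<in>V. \<forall>w\<in>V. \<forall>x\<in>V.
        v \<in> interval V E u w \<and> w \<in> interval V E v x \<and> E v w \<longrightarrow>
        int (dist V E u x) \<ge> int (dist V E u v) + int (dist V E v x) - int i)"

definition ecc :: "'a set \<Rightarrow> ('a \<Rightarrow> 'a \<Rightarrow> bool) \<Rightarrow> 'a \<Rightarrow> nat" where
  "ecc V E v = Max ((\<lambda>w. dist V E w v) ` V)"

definition diam :: "'a set \<Rightarrow> ('a \<Rightarrow> 'a \<Rightarrow> bool) \<Rightarrow> nat" where
  "diam V E = Max (ecc V E ` V)"

definition farthest :: "'a set \<Rightarrow> ('a \<Rightarrow> 'a \<Rightarrow> bool) \<Rightarrow> 'a \<Rightarrow> 'a set" where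
  "farthest V E u = {w \<in> V. dist V E u w = ecc V E u}"

end

theory Submission
  imports Defs
begin

text \<open>
  Fix a diametral pair \<open>x, y\<close> and let \<open>S\<close> be the slice of \<open>I(x,y)\<close> at distance
  \<open>m = \<lfloor>diam/2\<rfloor>\<close> from \<open>x\<close>. In an \<open>\<alpha>\<^sub>i\<close>-metric graph any two vertices of a slice are at
  distance at most \<open>i + 1\<close>, and the point \<open>z\<close> of \<open>S\<close> nearest to a vertex \<open>w\<close> satisfies
  \<open>d(w,z) + d(z,x) \<le> d(w,x) + i\<close> or \<open>d(w,z) + d(z,y) \<le> d(w,y) + i\<close>, so \<open>d(w,z) \<le> e(w) + i - m\<close>.
  Joining \<open>u\<close> to \<open>v \<in> F(u)\<close> through \<open>S\<close> gives
  \<open>e(u) = d(u,v) \<le> (e(u) + i - m) + (i + 1) + (e(v) + i - m)\<close>, i.e. \<open>diam \<le> 2m + 1 \<le> e(v) + 3i + 2\<close>.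
\<close>

lemma walk_append_Cons: "walk E (xs @ y # ys) \<longleftrightarrow> walk E (xs @ [y]) \<and> walk E (y # ys)"
proof (induction xs)
  case (Cons a xs)
  then show ?case by (cases xs) auto
qed simp

lemma walk_rev:
  assumes "\<And>x y. E x y \<Longrightarrow> E y x" and "walk E xs"
  shows "walk E (rev xs)"
  using assms(2)
proof (induction xs rule: induct_list012)
  case (3 x y zs)
  then have "walk E (rev zs @ [y])" "walk E [y, x]"
    using assms(1)[of x y] by auto
  then show ?case
    using walk_append_Cons[of E "rev zs" y "[x]"] by simp
qed simp_all

lemma path_between_append:
  assumes "path_between V E u v xs" and "path_between V E v w ys"
  shows "path_between V E u w (xs @ tl ys)"
proof -
  obtain xs' where xs: "xs = xs' @ [v]"
    using assms(1) unfolding path_between_def by (metis append_butlast_last_id)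
  obtain ys' where ys: "ys = v # ys'"
    using assms(2) unfolding path_between_def by (metis list.collapse)
  have "walk E (xs' @ v # ys')"
    using assms walk_append_Cons[of E xs' v ys'] unfolding xs ys path_between_def by simp
  moreover have "hd (xs' @ v # ys') = u"
    using assms(1) unfolding xs path_between_def by (cases xs') auto
  moreover have "last (xs' @ v # ys') = w"
    using assms(2) unfolding ys path_between_def by (cases ys') auto
  ultimately show ?thesis
    using assms unfolding xs ys path_between_def by auto
qed

locale finite_graph =
  fixes V :: "'a set" and E :: "'a \<Rightarrow> 'a \<Rightarrow> bool"
  assumes graph: "graph V E"
begin

abbreviation d where "d \<equiv> dist V E"

lemma edge_sym: "E x y \<Longrightarrow> E y x"
  and edge_vertices: "E x y \<Longrightarrow> x \<in> V \<and> y \<in> V"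
  and edge_irrefl: "\<not> E x x"
  and finite_V: "finite V"
  and V_nonempty: "V \<noteq> {}"
  using graph unfolding graph_def by blast+

lemma shortest_path_exists:
  assumes "u \<in> V" "v \<in> V"
  obtains xs where "path_between V E u v xs" "length xs = Suc (d u v)"
proof -
  obtain xs where "path_between V E u v xs"
    using graph assms unfolding graph_def by blast
  then have "\<exists>n xs. path_between V E u v xs \<and> length xs = Suc n"
    unfolding path_between_def by (metis length_greater_0_conv Suc_pred)
  then have "\<exists>xs. path_between V E u v xs \<and> length xs = Suc (d u v)"
    unfolding dist_def by (rule LeastI_ex)
  with that show ?thesis by blast
qed

lemma dist_le_length:
  assumes "path_between V E u v xs"
  shows "d u v + 1 \<le> length xs"
proof -
  have "xs \<noteq> []" using assms unfolding path_between_def by auto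
  then have "d u v \<le> length xs - 1"
    unfolding dist_def using assms by (intro Least_le) auto
  with \<open>xs \<noteq> []\<close> show ?thesis by (cases xs) auto
qed

lemma dist_self: "u \<in> V \<Longrightarrow> d u u = 0"
  using dist_le_length[of u u "[u]"] unfolding path_between_def by simp

lemma dist_eq_0:
  assumes "u \<in> V" "v \<in> V" "d u v = 0"
  shows "u = v"
proof -
  obtain xs where "path_between V E u v xs" "length xs = 1"
    using shortest_path_exists assms by (metis One_nat_def)
  then show ?thesis unfolding path_between_def by (cases xs) auto
qed

lemma dist_triangle:
  assumes "u \<in> V" "v \<in> V" "w \<in> V"
  shows "d u w \<le> d u v + d v w"
proof -
  obtain xs where xs: "path_between V E u v xs" "length xs = Suc (d u v)"
    using shortest_path_exists assms by blast
  obtain ys where ys: "path_between V E v w ys" "length ys = Suc (d v w)"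
    using shortest_path_exists assms by blast
  show ?thesis
    using dist_le_length[OF path_between_append[OF xs(1) ys(1)]] xs(2) ys(2) by simp
qed

lemma dist_commute:
  assumes "u \<in> V" "v \<in> V"
  shows "d u v = d v u"
proof -
  have "d b a \<le> d a b" if ab: "a \<in> V" "b \<in> V" for a b
  proof -
    obtain xs where xs: "path_between V E a b xs" "length xs = Suc (d a b)"
      using shortest_path_exists ab by blast
    then have "path_between V E b a (rev xs)"
      using walk_rev[of E xs] edge_sym unfolding path_between_def
      by (auto simp: hd_rev last_rev)
    then show ?thesis using dist_le_length xs(2) by fastforce
  qed
  then show ?thesis using assms by (meson le_antisym)
qed

lemma dist_edge:
  assumes "E u v"
  shows "d u v = 1"
proof -
  have "path_between V E u v [u, v]"
    using assms edge_vertices unfolding path_between_def by auto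
  then have "d u v \<le> 1" using dist_le_length by fastforce
  moreover have "d u v \<noteq> 0" using dist_eq_0 assms edge_irrefl edge_vertices by blast
  ultimately show ?thesis by simp
qed

lemma neighbour_towards:
  assumes "u \<in> V" "w \<in> V" "u \<noteq> w"
  obtains n where "E n w" "d u n + 1 = d u w"
proof -
  obtain xs where xs: "path_between V E u w xs" "length xs = Suc (d u w)"
    using shortest_path_exists assms by blast
  have "d u w \<noteq> 0" using dist_eq_0 assms by blast
  then have "butlast xs \<noteq> []" using xs(2) by (cases xs) auto
  moreover have "xs \<noteq> []" "last xs = w" using xs(1) unfolding path_between_def by auto
  ultimately obtain ys n where ys: "xs = ys @ [n, w]"
    by (metis append_butlast_last_id append.assoc append_Cons append_Nil)
  have walks: "walk E (ys @ [n])" "E n w"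
    using xs(1) walk_append_Cons[of E ys n "[w]"] unfolding ys path_between_def by auto
  have "path_between V E u n (ys @ [n])"
    using xs(1) walks unfolding ys path_between_def by (cases ys) auto
  then have "d u n + 1 \<le> d u w" using dist_le_length xs(2) ys by fastforce
  moreover have "d u w \<le> d u n + 1"
    using dist_triangle[of u n w] dist_edge[OF walks(2)] edge_vertices walks(2) assms by auto
  ultimately show ?thesis using that walks(2) by simp
qed

lemma neighbour_towards_source_in_interval:
  assumes "x \<in> V" "y \<in> V" "z \<in> interval V E x y" "E c z" "d x c + 1 = d x z"
  shows "c \<in> interval V E x y" and "d c y = d z y + 1"
proof -
  have "c \<in> V" "z \<in> V" using assms(4) edge_vertices by auto
  then have "d x y \<le> d x c + d c y" "d c y \<le> d c z + d z y"
    using dist_triangle assms(1,2) by auto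
  then show "d c y = d z y + 1" "c \<in> interval V E x y"
    using assms(3,5) dist_edge[OF assms(4)] \<open>c \<in> V\<close> unfolding interval_def by auto
qed

definition slice :: "'a \<Rightarrow> 'a \<Rightarrow> nat \<Rightarrow> 'a set" where
  "slice x y k = {z \<in> interval V E x y. d x z = k}"

lemma slice_nonempty:
  assumes "x \<in> V" "y \<in> V" "k \<le> d x y"
  shows "slice x y k \<noteq> {}"
proof -
  have "\<exists>p\<in>V. d x p = d x y - j \<and> d p y = j" if "j \<le> d x y" for j
    using that
  proof (induction j)
    case 0
    then show ?case using assms(2) dist_self by auto
  next
    case (Suc j)
    then obtain p where p: "p \<in> V" "d x p = d x y - j" "d p y = j" by auto
    then have "x \<noteq> p" using Suc.prems dist_self assms(1) by auto
    then obtain n where n: "E n p" "d x n + 1 = d x p"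
      using neighbour_towards assms(1) p(1) by metis
    then have "n \<in> V" using edge_vertices by auto
    then have "d n y \<le> d n p + d p y" "d x y \<le> d x n + d n y"
      using dist_triangle p(1) assms by auto
    then show ?case using \<open>n \<in> V\<close> n p Suc.prems dist_edge[OF n(1)] by (intro bexI[of _ n]) auto
  qed
  from this[of "d x y - k"] obtain p where "p \<in> V" "d x p = k" "d p y = d x y - k"
    using assms(3) by auto
  then have "p \<in> slice x y k"
    using assms(3) unfolding slice_def interval_def by auto
  then show ?thesis by blast
qed

lemma dist_le_ecc:
  assumes "v \<in> V" "w \<in> V"
  shows "d v w \<le> ecc V E v"
  using assms finite_V dist_commute unfolding ecc_def by (metis Max_ge finite_imageI imageI)

lemma diam_attained:
  obtains x y where "x \<in> V" "y \<in> V" "d x y = diam V E"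
proof -
  have "diam V E \<in> ecc V E ` V"
    unfolding diam_def using finite_V V_nonempty by (intro Max_in) auto
  then obtain y where "y \<in> V" "ecc V E y = diam V E" by auto
  moreover have "ecc V E y \<in> (\<lambda>w. d w y) ` V"
    unfolding ecc_def using finite_V V_nonempty by (intro Max_in) auto
  then obtain x where "x \<in> V" "d x y = ecc V E y" by auto
  ultimately show ?thesis using that by auto
qed

end

locale alpha_metric_graph = finite_graph +
  fixes i :: nat
  assumes alpha_metric: "alpha_metric i V E"
begin

lemma alpha_metric_ineq:
  assumes "u \<in> V" "v \<in> V" "w \<in> V" "x \<in> V" "E v w"
    and "d u v + d v w = d u w" and "d v w + d w x = d v x"
  shows "d u v + d v x \<le> d u x + i"
proof -
  have "v \<in> interval V E u w" "w \<in> interval V E v x"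
    using assms unfolding interval_def by auto
  then show ?thesis
    using alpha_metric assms(1-5) unfolding alpha_metric_def by fastforce
qed

lemma dist_neighbour_towards_source_eq:
  assumes "x \<in> V" "y \<in> V" "a \<in> V" "b \<in> interval V E x y" "E b' b" "d x b' + 1 = d x b"
    and "d x a \<le> d x b" "d a y \<le> d b y + 1" "i + 2 \<le> d a b"
  shows "d a b' = d a b"
proof -
  have V: "b \<in> V" "b' \<in> V" using assms(5) edge_vertices by auto
  have b'y: "d b' y = d b y + 1"
    using neighbour_towards_source_in_interval assms(1,2,4-6) by blast
  have edge: "d b b' = 1" "d b' b = 1" using dist_edge assms(5) edge_sym by auto
  have "d a b' \<le> d a b + 1" "d a b \<le> d a b' + 1"
    using dist_triangle[of a b b'] dist_triangle[of a b' b] edge V assms(3) by auto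
  moreover have "d a b' \<noteq> d a b - 1"
  proof
    assume "d a b' = d a b - 1"
    then have "d y b + d b a \<le> d y a + i"
      using alpha_metric_ineq[of y b b' a] assms edge b'y V dist_commute edge_sym by simp
    then show False using assms(2,3,8,9) V dist_commute by fastforce
  qed
  moreover have "d a b' \<noteq> d a b + 1"
  proof
    assume "d a b' = d a b + 1"
    then have "d x b' + d b' a \<le> d x a + i"
      using alpha_metric_ineq[of x b' b a] assms edge V dist_commute by simp
    then show False using assms(3,6,7,9) V dist_commute \<open>d a b' = d a b + 1\<close> by fastforce
  qed
  ultimately show ?thesis by linarith
qed

text \<open>If two points of slice \<open>k + 1\<close> were at distance \<open>L \<ge> i + 2\<close>, moving first one and then
  the other a step towards \<open>x\<close> keeps their distance \<open>L\<close>, contradicting the bound for slice \<open>k\<close>.\<close>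

lemma slice_dist_le:
  assumes "x \<in> V" "y \<in> V" "z \<in> slice x y k" "z' \<in> slice x y k"
  shows "d z z' \<le> i + 1"
  using assms(3,4)
proof (induction k arbitrary: z z')
  case 0
  then have "z = x" "z' = x"
    using assms(1) dist_eq_0[of x z] dist_eq_0[of x z'] unfolding slice_def interval_def by auto
  then show ?case using assms(1) dist_self by simp
next
  case (Suc k)
  have z: "z \<in> interval V E x y" "d x z = Suc k" and z': "z' \<in> interval V E x y" "d x z' = Suc k"
    using Suc.prems unfolding slice_def by auto
  then have V: "z \<in> V" "z' \<in> V" and "x \<noteq> z" "x \<noteq> z'"
    using assms(1) dist_self unfolding interval_def by auto
  then obtain c c' where c: "E c z" "d x c + 1 = d x z" and c': "E c' z'" "d x c' + 1 = d x z'"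
    using neighbour_towards assms(1) by metis
  have cV: "c \<in> V" using c(1) edge_vertices by auto
  have cy: "d c y = d z y + 1" and "c \<in> slice x y k" "c' \<in> slice x y k"
    using neighbour_towards_source_in_interval assms(1,2) z z' c c' unfolding slice_def by auto
  then have IH: "d c c' \<le> i + 1" using Suc.IH by blast
  show ?case
  proof (rule ccontr)
    assume far: "\<not> d z z' \<le> i + 1"
    have same_dist_y: "d z y = d z' y" using z z' unfolding interval_def by simp
    have "d z' c = d z' z"
      using dist_neighbour_towards_source_eq[OF assms(1,2) V(2) z(1) c] z z' far same_dist_y V
        dist_commute by simp
    then have "d c c' = d c z'"
      using dist_neighbour_towards_source_eq[OF assms(1,2) cV z'(1) c'] c z z' cy same_dist_y
        far V cV dist_commute by simp
    then show False using IH far \<open>d z' c = d z' z\<close> V cV dist_commute by simp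
  qed
qed

text \<open>The next vertex on a shortest path from a nearest slice point \<open>z\<close> to \<open>w\<close> lies outside
  the slice, hence one step farther from \<open>x\<close> or from \<open>y\<close> than \<open>z\<close>; the \<open>\<alpha>\<^sub>i\<close>-inequality along
  that edge gives the bound.\<close>

lemma nearest_slice_point_dist:
  assumes "x \<in> V" "y \<in> V" "w \<in> V" "z \<in> slice x y k"
    and nearest: "\<And>z'. z' \<in> slice x y k \<Longrightarrow> d w z \<le> d w z'"
  shows "d w z + k \<le> d w x + i \<or> d w z + (d x y - k) \<le> d w y + i"
proof (cases "w = z")
  case True
  then show ?thesis
    using assms(1-4) dist_commute dist_self unfolding slice_def interval_def by auto
next
  case False
  have z: "z \<in> V" "d x z = k" "d x z + d z y = d x y"
    using assms(4) unfolding slice_def interval_def by auto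
  obtain n where n: "E n z" "d w n + 1 = d w z"
    using neighbour_towards assms(3) z(1) False by metis
  have nV: "n \<in> V" using n edge_vertices by auto
  have edge: "d z n = 1" "d n z = 1" using dist_edge n(1) edge_sym by auto
  have tri: "d x n \<le> d x z + 1" "d n y \<le> d z y + 1" "d x y \<le> d x n + d n y"
    using dist_triangle[OF assms(1) z(1) nV] dist_triangle[OF nV z(1) assms(2)]
      dist_triangle[OF assms(1) nV assms(2)] edge by auto
  have comm: "d n w = d w n" "d z w = d w z" "d x w = d w x" "d y w = d w y" "d y z = d z y"
    "d y n = d n y"
    using dist_commute nV assms(1-3) z(1) by auto
  consider "d x n = d x z + 1" | "d n y = d z y + 1" | "n \<in> slice x y k"
    using tri z nV unfolding slice_def interval_def by fastforce
  then show ?thesis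
  proof cases
    case 1
    then have "d x z + d z w \<le> d x w + i"
      using alpha_metric_ineq[OF assms(1) z(1) nV assms(3)] edge n comm edge_sym by auto
    then show ?thesis using comm z by auto
  next
    case 2
    then have "d y z + d z w \<le> d y w + i"
      using alpha_metric_ineq[OF assms(2) z(1) nV assms(3)] edge n comm edge_sym by auto
    then show ?thesis using comm z by auto
  next
    case 3
    then show ?thesis using nearest n by fastforce
  qed
qed

lemma exists_slice_point_near:
  assumes "x \<in> V" "y \<in> V" "w \<in> V" "k \<le> d x y"
  obtains z where "z \<in> slice x y k"
    and "d w z + k \<le> d w x + i \<or> d w z + (d x y - k) \<le> d w y + i"
proof -
  obtain p where "p \<in> slice x y k" using slice_nonempty assms by blast
  then obtain z where "z \<in> slice x y k" "\<And>z'. z' \<in> slice x y k \<Longrightarrow> d w z \<le> d w z'"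
    using ex_has_least_nat[of "\<lambda>z. z \<in> slice x y k" p "d w"] by blast
  then show ?thesis using that nearest_slice_point_dist assms by blast
qed

end

theorem lemma10:
  fixes V :: "'a set" and E :: "'a \<Rightarrow> 'a \<Rightarrow> bool" and i :: nat and u v :: 'a
  assumes "graph V E"
    and "alpha_metric i V E"
    and "u \<in> V"
    and "v \<in> farthest V E u"
  shows "int (ecc V E v) \<ge> int (diam V E) - 3 * int i - 2"
proof -
  interpret alpha_metric_graph V E i using assms(1,2) by unfold_locales
  have vV: "v \<in> V" and uv: "d u v = ecc V E u"
    using assms(4) unfolding farthest_def by auto
  obtain x y where xy: "x \<in> V" "y \<in> V" "d x y = diam V E" using diam_attained .
  define m where "m = d x y div 2"
  have m: "m \<le> d x y" "m \<le> d x y - m" "d x y \<le> 2 * m + 1" unfolding m_def by auto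
  obtain zu where zu: "zu \<in> slice x y m"
    and near_u: "d u zu + m \<le> d u x + i \<or> d u zu + (d x y - m) \<le> d u y + i"
    using exists_slice_point_near[OF xy(1,2) assms(3) m(1)] by blast
  obtain zv where zv: "zv \<in> slice x y m"
    and near_v: "d v zv + m \<le> d v x + i \<or> d v zv + (d x y - m) \<le> d v y + i"
    using exists_slice_point_near[OF xy(1,2) vV m(1)] by blast
  have "d zu zv \<le> i + 1" using slice_dist_le xy zu zv by blast
  moreover have "d u v \<le> d u zu + d zu zv + d v zv"
  proof -
    have "zu \<in> V" "zv \<in> V" using zu zv unfolding slice_def interval_def by auto
    then show ?thesis
      using dist_triangle[OF assms(3) \<open>zu \<in> V\<close> vV] dist_triangle[of zu zv v]
        dist_commute[of zv v] vV by linarith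
  qed
  moreover have "d u x \<le> d u v" "d u y \<le> d u v"
    using dist_le_ecc[OF assms(3)] xy(1,2) unfolding uv by blast+
  moreover have "d v x \<le> ecc V E v" "d v y \<le> ecc V E v"
    using dist_le_ecc[OF vV] xy(1,2) by blast+
  ultimately have "d x y \<le> ecc V E v + 3 * i + 2"
    using near_u near_v m by linarith
  then show ?thesis using xy(3) by linarith
qed

end
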